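(* Let $n\ge2$, $d\ge1$, $r\ge3$ with $n\ge d$ and $dr\equiv0\pmod n$. Then $Q_n(d,r)$ is $G$-orbit proportional if and only if $n\equiv 0\pmod d$.
   Context: $\mathbb{Z}_2^n=\{0,1\}^n$ with coordinatewise addition mod 2; $e_i$ is the $i$-th standard basis vector, subscripts read modulo $n$; $\sigma^j(b)$ is the vector with $\sigma^j(b)_{i+j}=b_i$ (indices mod $n$). $G$ is the group on $\mathbb{Z}_2^n\times\mathbb{Z}_r$ with multiplication $(a,x)(b,y)=(a+\sigma^{dx}(b),x+y)$; $Q_n(d,r)$ is its Cayley graph with connection set $\{(0_n,1),(0_n,r-1),(e_1,0),\dots,(e_d,0)\}$, so $(a,x)$ is adjacent to $(a+e_{i+dx},x)$ for $1\le i\le d$ and to $(a,x\pm1)$. $G$ acts on the graph by left multiplication $u\mapsto gu$, and its orbits on edges are $E_0=\{\{(a,x),(a,x+1)\}\}$ and $E_i=\{\{(a,x),(a+e_{i+dx},x)\}\}$, $1\le i\le d$. A graph $X$ with edge partition into $H$-orbits $E_0,\dots,E_k$ is $H$-orbit proportional if for every pair of vertices $u,v$, every shortest $u$–$v$ path $P$ and every $u$–$v$ path $P'$ satisfy $|E(P)\cap E_i|\le|E(P')\cap E_i|$ for all $i$. *)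

theory Defs
  imports Main
begin

(* Z_2^n is modelled as subsets of {0..<n} (a \<subseteq> {0..<n} is the support of a
   0/1 vector), addition is symmetric difference; the standard basis vector e_i
   (subscript read modulo n) is {i mod n}. *)

definition symdiff :: "nat set \<Rightarrow> nat set \<Rightarrow> nat set" where
  "symdiff a b = (a - b) \<union> (b - a)"

definition ebasis :: "nat \<Rightarrow> nat \<Rightarrow> nat set" where
  "ebasis n i = {i mod n}"

type_synonym vert = "nat set \<times> nat"

definition Qverts :: "nat \<Rightarrow> nat \<Rightarrow> vert set" where
  "Qverts n r = {(a, x). a \<subseteq> {0..<n} \<and> x < r}"

definition Qorbit :: "nat \<Rightarrow> nat \<Rightarrow> nat \<Rightarrow> nat \<Rightarrow> vert set set" where
  "Qorbit n d r i =
     (if i = 0 then {{(a, x), (a, (x + 1) mod r)} | a x. (a, x) \<in> Qverts n r}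
      else {{(a, x), (symdiff a (ebasis n (i + d * x)), x)} | a x. (a, x) \<in> Qverts n r})"

definition Qedges :: "nat \<Rightarrow> nat \<Rightarrow> nat \<Rightarrow> vert set set" where
  "Qedges n d r = (\<Union>i\<in>{0..d}. Qorbit n d r i)"

definition path_edges :: "'v list \<Rightarrow> 'v set set" where
  "path_edges P = {{P ! k, P ! Suc k} | k. Suc k < length P}"

definition is_path :: "'v set \<Rightarrow> 'v set set \<Rightarrow> 'v list \<Rightarrow> 'v \<Rightarrow> 'v \<Rightarrow> bool" where
  "is_path V E P u v \<longleftrightarrow>
     P \<noteq> [] \<and> hd P = u \<and> last P = v \<and> distinct P \<and> set P \<subseteq> V \<and>
     (\<forall>k. Suc k < length P \<longrightarrow> {P ! k, P ! Suc k} \<in> E)"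

definition is_shortest_path :: "'v set \<Rightarrow> 'v set set \<Rightarrow> 'v list \<Rightarrow> 'v \<Rightarrow> 'v \<Rightarrow> bool" where
  "is_shortest_path V E P u v \<longleftrightarrow>
     is_path V E P u v \<and> (\<forall>P'. is_path V E P' u v \<longrightarrow> length P \<le> length P')"

definition orbit_proportional ::
  "'v set \<Rightarrow> 'v set set \<Rightarrow> 'i set \<Rightarrow> ('i \<Rightarrow> 'v set set) \<Rightarrow> bool" where
  "orbit_proportional V E I Orb \<longleftrightarrow>
     (\<forall>u v P P'. is_shortest_path V E P u v \<longrightarrow> is_path V E P' u v \<longrightarrow>
        (\<forall>i\<in>I. card (path_edges P \<inter> Orb i) \<le> card (path_edges P' \<inter> Orb i)))"

definition Q_G_orbit_proportional :: "nat \<Rightarrow> nat \<Rightarrow> nat \<Rightarrow> bool" where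
  "Q_G_orbit_proportional n d r =
     orbit_proportional (Qverts n r) (Qedges n d r) {0..d} (Qorbit n d r)"

end

theory Submission
  imports Defs "HOL-Number_Theory.Cong"
begin

text \<open>
  Every edge of \<open>E\<^sub>i\<close>, \<open>i \<ge> 1\<close>, at level \<open>x\<close> toggles the coordinate \<open>i + dx\<close>,
  while the edges of \<open>E\<^sub>0\<close> change the level only.

  If \<open>d\<close> divides \<open>n\<close>, coordinate \<open>c\<close> is toggled only by edges of the orbit
  \<open>E\<^sub>i\<close> with \<open>i \<equiv> c (mod d)\<close>, so a \<open>u\<close>--\<open>v\<close> path uses at least as many
  \<open>E\<^sub>i\<close>-edges as there are such coordinates in which \<open>u\<close> and \<open>v\<close> differ.  Conversely any
  \<open>u\<close>--\<open>v\<close> path can be shadowed by a walk with the same level moves that toggles each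
  differing coordinate exactly once.  Comparing lengths shows that a shortest path
  attains every one of these lower bounds, hence uses no more edges of any orbit than
  any other path.

  If \<open>d\<close> does not divide \<open>n\<close>, put \<open>g = gcd d n < d\<close>.  Since \<open>n\<close> divides \<open>dr\<close>,
  some level \<open>x < r\<close> has \<open>dx \<equiv> -g (mod n)\<close>, and there \<open>E\<^sub>1\<^sub>+\<^sub>g\<close> toggles
  coordinate 1, which at level 0 is toggled by \<open>E\<^sub>1\<close>.  Going up to level \<open>x\<close>,
  toggling coordinate 1 and coming back is a path avoiding \<open>E\<^sub>1\<close> between the
  endpoints of an \<open>E\<^sub>1\<close>-edge.
\<close>

section \<open>Paths and walks\<close>

lemma path_edges_Nil [simp]: "path_edges [] = {}"
  and path_edges_single [simp]: "path_edges [p] = {}"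
  by (simp_all add: path_edges_def)

lemma path_edges_Cons_Cons [simp]:
  "path_edges (p # q # rest) = insert {p, q} (path_edges (q # rest))"
  unfolding path_edges_def
proof (intro equalityI subsetI)
  fix e assume "e \<in> {{(p#q#rest) ! k, (p#q#rest) ! Suc k} | k. Suc k < length (p#q#rest)}"
  then obtain k where "Suc k < length (p#q#rest)" "e = {(p#q#rest) ! k, (p#q#rest) ! Suc k}"
    by blast
  then show "e \<in> insert {p, q} {{(q#rest) ! k, (q#rest) ! Suc k} | k. Suc k < length (q#rest)}"
    by (cases k) auto
next
  fix e assume "e \<in> insert {p, q} {{(q#rest) ! k, (q#rest) ! Suc k} | k. Suc k < length (q#rest)}"
  then consider "e = {p, q}" | k where "Suc k < length (q#rest)" "e = {(q#rest) ! k, (q#rest) ! Suc k}"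
    by blast
  then show "e \<in> {{(p#q#rest) ! k, (p#q#rest) ! Suc k} | k. Suc k < length (p#q#rest)}"
  proof cases
    case 1
    then show ?thesis by (auto intro!: exI[of _ 0])
  next
    case (2 k)
    then show ?thesis by (auto intro!: exI[of _ "Suc k"])
  qed
qed

lemma finite_path_edges: "finite (path_edges P)"
proof -
  have "finite {k. Suc k < length P}" by (rule finite_subset[of _ "{..<length P}"]) auto
  then show ?thesis unfolding path_edges_def by (rule finite_image_set)
qed

lemma path_edges_subset_set:
  assumes "e \<in> path_edges P"
  shows "e \<subseteq> set P"
proof -
  obtain k where "Suc k < length P" "e = {P ! k, P ! Suc k}"
    using assms by (auto simp: path_edges_def)
  then show ?thesis by (simp add: Suc_lessD)
qed

lemma path_edges_append_Cons:
  "path_edges (xs @ y # ys) = path_edges (xs @ [y]) \<union> path_edges (y # ys)"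
  by (induction xs rule: induct_list012) auto

lemma path_edges_snoc:
  assumes "xs \<noteq> []"
  shows "path_edges (xs @ [y]) = insert {last xs, y} (path_edges xs)"
proof -
  have "path_edges (xs @ [y]) = path_edges (butlast xs @ [last xs]) \<union> path_edges [last xs, y]"
    using path_edges_append_Cons[of "butlast xs" "last xs" "[y]"] assms
    by (metis append_butlast_last_id append.assoc append_Cons append_Nil)
  then show ?thesis using assms by simp
qed

lemma path_edges_append:
  assumes "xs \<noteq> []" "ys \<noteq> []"
  shows "path_edges (xs @ ys) = insert {last xs, hd ys} (path_edges xs \<union> path_edges ys)"
proof -
  have "ys = hd ys # tl ys" using assms(2) by simp
  then have "path_edges (xs @ ys) = path_edges (xs @ [hd ys]) \<union> path_edges ys"
    using path_edges_append_Cons[of xs "hd ys" "tl ys"] by metis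
  then show ?thesis by (simp add: path_edges_snoc[OF assms(1)])
qed

lemma path_edges_rev: "path_edges (rev P) = path_edges P"
proof (induction P)
  case (Cons p P)
  show ?case
  proof (cases "P = []")
    case False
    have "path_edges (rev P @ [p]) = insert {last (rev P), p} (path_edges (rev P))"
      by (rule path_edges_snoc) (use False in simp)
    moreover have "path_edges (p # P) = insert {p, hd P} (path_edges P)"
      using False by (cases P) simp_all
    moreover have "{last (rev P), p} = {p, hd P}"
      using False by (auto simp: last_rev)
    ultimately show ?thesis using Cons.IH by simp
  qed simp
qed simp

lemma card_path_edges_Cons_Cons_Int:
  assumes "distinct (p # q # rest)" "{p, q} \<in> A"
  shows "card (path_edges (p # q # rest) \<inter> A) = Suc (card (path_edges (q # rest) \<inter> A))"
proof -
  have "{p, q} \<notin> path_edges (q # rest)"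
    using assms(1) path_edges_subset_set[of "{p, q}" "q # rest"] by auto
  then show ?thesis using assms(2) by (simp add: finite_path_edges)
qed

lemma card_path_edges: "distinct P \<Longrightarrow> card (path_edges P) = length P - 1"
proof (induction P rule: induct_list012)
  case (3 p q rest)
  then show ?case using card_path_edges_Cons_Cons_Int[OF "3.prems", of UNIV] by simp
qed simp_all

definition is_walk :: "'v set \<Rightarrow> 'v set set \<Rightarrow> 'v list \<Rightarrow> bool" where
  "is_walk V E W \<longleftrightarrow> W \<noteq> [] \<and> set W \<subseteq> V \<and> path_edges W \<subseteq> E"

lemma is_path_iff_walk:
  "is_path V E P u v \<longleftrightarrow> is_walk V E P \<and> distinct P \<and> hd P = u \<and> last P = v"
  unfolding is_path_def is_walk_def path_edges_def by blast

lemma is_walk_hd_last_in: "is_walk V E W \<Longrightarrow> hd W \<in> V \<and> last W \<in> V"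
  unfolding is_walk_def by auto

lemma is_walk_rev: "is_walk V E (rev W) \<longleftrightarrow> is_walk V E W"
  unfolding is_walk_def by (simp add: path_edges_rev)

lemma is_walk_append:
  "is_walk V E W1 \<Longrightarrow> is_walk V E W2 \<Longrightarrow> {last W1, hd W2} \<in> E \<Longrightarrow> is_walk V E (W1 @ W2)"
  unfolding is_walk_def by (simp add: path_edges_append)

lemma walk_contains_path:
  "is_walk V E W \<Longrightarrow>
     \<exists>P. is_path V E P (hd W) (last W) \<and> length P \<le> length W \<and> path_edges P \<subseteq> path_edges W"
proof (induction "length W" arbitrary: W rule: less_induct)
  case less
  show ?case
  proof (cases "distinct W")
    case True
    then show ?thesis using less.prems by (auto simp: is_path_iff_walk)
  next
    case False
    then obtain xs y ys zs where W: "W = xs @ y # ys @ y # zs"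
      using not_distinct_decomp by fastforce
    define W' where "W' = xs @ y # zs"
    have edges: "path_edges W' \<subseteq> path_edges W"
      using path_edges_append_Cons[of xs y zs] path_edges_append_Cons[of xs y "ys @ y # zs"]
        path_edges_append_Cons[of "y # ys" y zs]
      by (auto simp: W W'_def)
    have "is_walk V E W'" "length W' < length W"
      using less.prems edges by (auto simp: is_walk_def W W'_def)
    moreover have "hd W' = hd W" "last W' = last W"
      by (cases xs; cases zs rule: rev_cases; simp add: W W'_def)+
    ultimately show ?thesis using less.hyps edges by fastforce
  qed
qed

lemma is_shortest_path_edge:
  assumes "{u, v} \<in> E" "u \<in> V" "v \<in> V" "u \<noteq> v"
  shows "is_shortest_path V E [u, v] u v"
proof -
  have "2 \<le> length P" if "is_path V E P u v" for P
  proof (rule ccontr)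
    assume "\<not> 2 \<le> length P"
    moreover have "P \<noteq> []" "hd P = u" "last P = v" using that by (auto simp: is_path_def)
    ultimately show False using assms(4) by (cases P) (auto simp: Suc_le_eq)
  qed
  moreover have "is_path V E [u, v] u v" using assms by (auto simp: is_path_iff_walk is_walk_def)
  ultimately show ?thesis by (auto simp: is_shortest_path_def numeral_2_eq_2)
qed

lemma symdiff_empty [simp]: "symdiff a {} = a"
  by (simp add: symdiff_def)

lemma symdiff_symdiff_self [simp]: "symdiff a (symdiff a b) = b"
  by (auto simp: symdiff_def)

lemma symdiff_Un: "S \<inter> T = {} \<Longrightarrow> symdiff (symdiff a S) T = symdiff a (S \<union> T)"
  by (auto simp: symdiff_def)

lemma symdiff_subset: "a \<subseteq> A \<Longrightarrow> b \<subseteq> A \<Longrightarrow> symdiff a b \<subseteq> A"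
  by (auto simp: symdiff_def)

definition flipped :: "('a set \<times> 'b) set \<Rightarrow> 'a set" where
  "flipped e = (\<Union>p\<in>e. fst p) - (\<Inter>p\<in>e. fst p)"

lemma flipped_doubleton [simp]: "flipped {p, q} = symdiff (fst p) (fst q)"
  by (auto simp: flipped_def symdiff_def)

lemma flipped_along_path:
  "P \<noteq> [] \<Longrightarrow> c \<in> symdiff (fst (hd P)) (fst (last P)) \<Longrightarrow> \<exists>e\<in>path_edges P. c \<in> flipped e"
proof (induction P rule: induct_list012)
  case (3 p q rest)
  then show ?case by (cases "c \<in> symdiff (fst q) (fst (last (q # rest)))") (auto simp: symdiff_def)
qed (auto simp: symdiff_def)

lemma mod_add_cancel_interval:
  fixes i j m n :: nat
  assumes "(i + m) mod n = (j + m) mod n" "i \<in> {1..n}" "j \<in> {1..n}"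
  shows "i = j"
proof -
  have "i mod n = j mod n" using assms(1) cong_add_rcancel_nat unfolding cong_def by blast
  then show ?thesis using assms(2,3) by (auto simp: le_less)
qed

lemma exists_level_cancelling_gcd:
  fixes d n r :: nat
  assumes "0 < d" "0 < r" "n dvd d * r"
  shows "\<exists>x<r. n dvd d * x + gcd d n"
proof -
  obtain x y where xy: "d * x = n * y + gcd d n" using bezout_nat[of d n] assms(1) by auto
  \<comment> \<open>\<open>dx \<equiv> g\<close>, so \<open>d x (n - 1) \<equiv> -g (mod n)\<close>; then reduce modulo \<open>r\<close> using \<open>n dvd d r\<close>.\<close>
  define x1 where "x1 = x * (n - 1)"
  have "n dvd d * x1 + gcd d n"
  proof (cases n)
    case (Suc m)
    have "d * x1 + gcd d n = n * (y * m + gcd d n)"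
      using xy by (simp add: x1_def Suc algebra_simps) (metis mult.assoc mult.commute distrib_left)
    then show ?thesis by simp
  qed (use assms in simp)
  moreover have "d * x1 + gcd d n = (d * (x1 mod r) + gcd d n) + d * r * (x1 div r)"
    by (metis add.commute add.left_commute div_mult_mod_eq distrib_left mult.assoc mult.commute)
  ultimately have "n dvd d * (x1 mod r) + gcd d n"
    using assms(3) by (metis dvd_add_left_iff dvd_mult2)
  then show ?thesis using assms(2) by (intro exI[of _ "x1 mod r"]) simp
qed

section \<open>The graph \<open>Q\<^sub>n(d, r)\<close>\<close>

lemma mem_Qverts [simp]: "(a, x) \<in> Qverts n r \<longleftrightarrow> a \<subseteq> {0..<n} \<and> x < r"
  by (simp add: Qverts_def)

locale Q_graph =
  fixes n d r :: nat
  assumes d_pos: "0 < d" and d_le_n: "d \<le> n"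
begin

abbreviation V :: "vert set" where "V \<equiv> Qverts n r"
abbreviation E :: "vert set set" where "E \<equiv> Qedges n d r"
abbreviation orb :: "nat \<Rightarrow> vert set set" where "orb \<equiv> Qorbit n d r"

lemma mem_Qorbit_0: "e \<in> orb 0 \<longleftrightarrow> (\<exists>a x. (a, x) \<in> V \<and> e = {(a, x), (a, (x + 1) mod r)})"
  by (auto simp: Qorbit_def)

lemma mem_Qorbit:
  "0 < i \<Longrightarrow> e \<in> orb i \<longleftrightarrow> (\<exists>a x. (a, x) \<in> V \<and> e = {(a, x), (symdiff a {(i + d * x) mod n}, x)})"
  by (auto simp: Qorbit_def ebasis_def)

lemma mem_Qedges: "e \<in> E \<longleftrightarrow> (\<exists>i\<in>{0..d}. e \<in> orb i)"
  by (simp add: Qedges_def)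

lemma Qorbit_subset_Qedges: "i \<in> {0..d} \<Longrightarrow> orb i \<subseteq> E"
  using mem_Qedges by blast

definition flippable :: "nat \<Rightarrow> nat \<Rightarrow> bool" where
  "flippable x c \<longleftrightarrow> (\<exists>i\<in>{1..d}. c = (i + d * x) mod n)"

lemma flippable_less: "flippable x c \<Longrightarrow> c < n"
  using d_pos d_le_n by (auto simp: flippable_def)

lemma flip_edge:
  assumes "(a, x) \<in> V" "flippable x c"
  shows "{(a, x), (symdiff a {c}, x)} \<in> E"
proof -
  obtain i where i: "i \<in> {1..d}" "c = (i + d * x) mod n"
    using assms(2) by (auto simp: flippable_def)
  then have "{(a, x), (symdiff a {c}, x)} \<in> orb i"
    using assms(1) mem_Qorbit[of i] by auto
  then show ?thesis using i(1) by (auto simp: mem_Qedges)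
qed

lemma flipped_Qorbit_0: "e \<in> orb 0 \<Longrightarrow> flipped e = {}"
  by (auto simp: mem_Qorbit_0 symdiff_def)

lemma Qorbit_level_flipped:
  assumes "0 < i" "e \<in> orb i"
  shows "\<exists>x. snd ` e = {x} \<and> flipped e = {(i + d * x) mod n}"
proof -
  obtain a x where "e = {(a, x), (symdiff a {(i + d * x) mod n}, x)}"
    using assms mem_Qorbit by blast
  then show ?thesis by simp
qed

lemma Qorbits_disjoint:
  assumes "i \<in> {0..d}" "j \<in> {0..d}" "i \<noteq> j"
  shows "orb i \<inter> orb j = {}"
proof (rule ccontr)
  assume "orb i \<inter> orb j \<noteq> {}"
  then obtain e where e: "e \<in> orb i" "e \<in> orb j" by blast
  consider "i = 0" | "j = 0" | "0 < i" "0 < j" by blast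
  then show False
  proof cases
    case 1
    then show False using e assms(3) flipped_Qorbit_0[of e] Qorbit_level_flipped[of j e] by auto
  next
    case 2
    then show False using e assms(3) flipped_Qorbit_0[of e] Qorbit_level_flipped[of i e] by auto
  next
    case 3
    obtain x x' where x: "snd ` e = {x}" "flipped e = {(i + d * x) mod n}"
      and x': "snd ` e = {x'}" "flipped e = {(j + d * x') mod n}"
      using Qorbit_level_flipped 3 e by meson
    have "x = x'" using x(1) x'(1) by simp
    then have "(i + d * x) mod n = (j + d * x) mod n" using x(2) x'(2) by simp
    then have "i = j" by (rule mod_add_cancel_interval) (use assms(1,2) 3 d_le_n in auto)
    then show False using assms(3) by simp
  qed
qed

lemma flipped_Qedge_subset_singleton:
  assumes "e \<in> E"
  shows "\<exists>c. flipped e \<subseteq> {c}"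
proof -
  obtain i where "e \<in> orb i" using assms by (auto simp: mem_Qedges)
  then show ?thesis by (cases "i = 0") (auto dest: flipped_Qorbit_0 Qorbit_level_flipped)
qed

lemma flippable_of_flipped:
  assumes "e \<in> E" "c \<in> flipped e" "p \<in> e"
  shows "flippable (snd p) c"
proof -
  obtain i where i: "i \<in> {0..d}" "e \<in> orb i" using assms(1) by (auto simp: mem_Qedges)
  have "i \<noteq> 0" using i(2) assms(2) flipped_Qorbit_0 by (metis empty_iff)
  then obtain x where x: "snd ` e = {x}" "flipped e = {(i + d * x) mod n}"
    using Qorbit_level_flipped i(2) by blast
  moreover have "snd p = x" using x(1) assms(3) by blast
  ultimately show ?thesis using i(1) \<open>i \<noteq> 0\<close> assms(2) by (auto simp: flippable_def)
qed

lemma Qorbit_0_of_level_change: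
  assumes "{p, q} \<in> E" "snd p \<noteq> snd q"
  shows "{p, q} \<in> orb 0"
proof -
  obtain i where i: "{p, q} \<in> orb i" using assms(1) by (auto simp: mem_Qedges)
  show ?thesis
  proof (cases "i = 0")
    case False
    then obtain x where "snd ` {p, q} = {x}" using Qorbit_level_flipped i by blast
    then show ?thesis using assms(2) by auto
  qed (use i in simp)
qed

lemma Qorbit_0_translate:
  assumes "{p, q} \<in> orb 0" "b \<subseteq> {0..<n}"
  shows "{(b, snd p), (b, snd q)} \<in> orb 0"
proof -
  obtain a x where ax: "(a, x) \<in> V" "{p, q} = {(a, x), (a, (x + 1) mod r)}"
    using assms(1) mem_Qorbit_0 by blast
  then have "{(b, snd p), (b, snd q)} = {(b, x), (b, (x + 1) mod r)}"
    by (auto simp: doubleton_eq_iff)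
  then show ?thesis using ax(1) assms(2) mem_Qorbit_0 by auto
qed

lemma walk_flipping_at_level:
  assumes "finite S" "\<forall>c\<in>S. flippable x c" "(a, x) \<in> V"
  shows "\<exists>W. is_walk V E W \<and> hd W = (a, x) \<and> last W = (symdiff a S, x) \<and> length W \<le> 1 + card S"
  using assms
proof (induction S rule: finite_induct)
  case empty
  then show ?case by (intro exI[of _ "[(a, x)]"]) (simp add: is_walk_def)
next
  case (insert c S)
  then obtain W where W: "is_walk V E W" "hd W = (a, x)" "last W = (symdiff a S, x)"
    "length W \<le> 1 + card S"
    by auto
  have last_V: "(symdiff a S, x) \<in> V" using is_walk_hd_last_in[OF W(1)] W(3) by simp
  have c: "flippable x c" using insert.prems by simp
  have step: "is_walk V E [(symdiff (symdiff a S) {c}, x)]"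
    using last_V flippable_less[OF c] symdiff_subset[of "symdiff a S" "{0..<n}" "{c}"]
    by (simp add: is_walk_def)
  have "is_walk V E (W @ [(symdiff (symdiff a S) {c}, x)])"
    using is_walk_append[OF W(1) step] flip_edge[OF last_V c] W(3) by simp
  moreover have "symdiff (symdiff a S) {c} = symdiff a (insert c S)"
    using insert.hyps(2) symdiff_Un[of S "{c}"] by auto
  ultimately show ?case using W insert.hyps
    by (intro exI[of _ "W @ [(symdiff (symdiff a S) {c}, x)]"]) (auto simp: is_walk_def)
qed

lemma walk_flips_then_level_change:
  assumes "{p, q} \<in> orb 0" "finite S" "\<forall>c\<in>S. flippable (snd p) c" "a \<subseteq> {0..<n}" "snd p < r"
    and W2: "is_walk V E W2" "hd W2 = (symdiff a S, snd q)"
  shows "\<exists>W. is_walk V E W \<and> hd W = (a, snd p) \<and> last W = last W2 \<and>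
    length W \<le> 1 + card S + length W2"
proof -
  have "(a, snd p) \<in> V" using assms(4,5) by simp
  then obtain W1 where W1: "is_walk V E W1" "hd W1 = (a, snd p)"
    "last W1 = (symdiff a S, snd p)" "length W1 \<le> 1 + card S"
    using walk_flipping_at_level[OF assms(2,3)] by blast
  have "symdiff a S \<subseteq> {0..<n}" using is_walk_hd_last_in[OF W1(1)] W1(3) by simp
  then have "{last W1, hd W2} \<in> orb 0"
    using Qorbit_0_translate[OF assms(1)] W1(3) W2(2) by simp
  then have "is_walk V E (W1 @ W2)"
    using is_walk_append[OF W1(1) W2(1)] Qorbit_subset_Qedges[of 0] by auto
  moreover have "W1 \<noteq> []" "W2 \<noteq> []" using W1(1) W2(1) by (simp_all add: is_walk_def)
  ultimately show ?thesis using W1(2,4) by (intro exI[of _ "W1 @ W2"]) simp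
qed

text \<open>The walk makes the same level moves as \<open>Q\<close> and toggles each coordinate of \<open>S\<close>
  at the first vertex of \<open>Q\<close> whose level allows it.\<close>

lemma walk_shadowing_levels:
  assumes "is_walk V E Q" "distinct Q" "finite S" "\<forall>c\<in>S. \<exists>p\<in>set Q. flippable (snd p) c"
    "a \<subseteq> {0..<n}"
  shows "\<exists>W. is_walk V E W \<and> hd W = (a, snd (hd Q)) \<and> last W = (symdiff a S, snd (last Q)) \<and>
    length W \<le> 1 + card (path_edges Q \<inter> orb 0) + card S"
  using assms
proof (induction Q arbitrary: a S rule: induct_list012)
  case 1
  then show ?case by (simp add: is_walk_def)
next
  case (2 p)
  have "(a, snd p) \<in> V" using "2.prems"(1,5) by (cases p) (simp add: is_walk_def)
  moreover have "\<forall>c\<in>S. flippable (snd p) c" using "2.prems"(4) by simp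
  ultimately obtain W where "is_walk V E W" "hd W = (a, snd p)" "last W = (symdiff a S, snd p)"
    "length W \<le> 1 + card S"
    using walk_flipping_at_level "2.prems"(3) by blast
  then show ?case by (intro exI[of _ W]) simp
next
  case (3 p q rest)
  have Q': "is_walk V E (q # rest)" "distinct (q # rest)" "{p, q} \<in> E"
    using "3.prems"(1,2) by (auto simp: is_walk_def)
  have "snd p < r" using "3.prems"(1) by (cases p) (simp add: is_walk_def)
  show ?case
  proof (cases "snd p = snd q")
    case True
    then have "\<forall>c\<in>S. \<exists>p'\<in>set (q # rest). flippable (snd p') c" using "3.prems"(4) by auto
    then obtain W where W: "is_walk V E W" "hd W = (a, snd q)"
      "last W = (symdiff a S, snd (last (q # rest)))"
      "length W \<le> 1 + card (path_edges (q # rest) \<inter> orb 0) + card S"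
      using "3.IH"(2)[OF Q'(1,2) "3.prems"(3) _ "3.prems"(5)] by auto
    have "card (path_edges (q # rest) \<inter> orb 0) \<le> card (path_edges (p # q # rest) \<inter> orb 0)"
      by (rule card_mono) (auto simp: finite_path_edges)
    then show ?thesis using W True by (intro exI[of _ W]) simp
  next
    case False
    then have pq: "{p, q} \<in> orb 0" using Qorbit_0_of_level_change Q'(3) by blast
    define S1 where "S1 = {c \<in> S. flippable (snd p) c}"
    have S: "finite S1" "finite (S - S1)" "S1 \<inter> (S - S1) = {}" "S1 \<union> (S - S1) = S"
      using "3.prems"(3) by (auto simp: S1_def)
    have "S1 \<subseteq> {0..<n}" using flippable_less by (auto simp: S1_def)
    then have a1: "symdiff a S1 \<subseteq> {0..<n}" using "3.prems"(5) by (simp add: symdiff_subset)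
    have "\<forall>c\<in>S - S1. \<exists>p'\<in>set (q # rest). flippable (snd p') c"
      using "3.prems"(4) by (auto simp: S1_def)
    then obtain W2 where W2: "is_walk V E W2" "hd W2 = (symdiff a S1, snd q)"
      "last W2 = (symdiff (symdiff a S1) (S - S1), snd (last (q # rest)))"
      "length W2 \<le> 1 + card (path_edges (q # rest) \<inter> orb 0) + card (S - S1)"
      using "3.IH"(2)[OF Q'(1,2) S(2) _ a1] by auto
    have "\<forall>c\<in>S1. flippable (snd p) c" by (simp add: S1_def)
    then obtain W where W: "is_walk V E W" "hd W = (a, snd p)" "last W = last W2"
      "length W \<le> 1 + card S1 + length W2"
      using walk_flips_then_level_change[OF pq S(1) _ "3.prems"(5) \<open>snd p < r\<close> W2(1,2)]
      by blast
    have "symdiff (symdiff a S1) (S - S1) = symdiff a S"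
      using symdiff_Un[OF S(3)] S(4) by simp
    moreover have "card (path_edges (p # q # rest) \<inter> orb 0) = Suc (card (path_edges (q # rest) \<inter> orb 0))"
      by (rule card_path_edges_Cons_Cons_Int[OF "3.prems"(2) pq])
    moreover have "card S = card S1 + card (S - S1)"
      using card_Un_disjoint[OF S(1,2,3)] S(4) by simp
    ultimately show ?thesis using W W2(3,4) by (intro exI[of _ W]) simp
  qed
qed

lemma symdiff_path_ends_subset:
  assumes "is_path V E P u v"
  shows "symdiff (fst u) (fst v) \<subseteq> {0..<n}"
proof -
  have "u \<in> V" "v \<in> V"
    using assms is_walk_hd_last_in by (auto simp: is_path_iff_walk)
  then have "fst u \<subseteq> {0..<n}" "fst v \<subseteq> {0..<n}" by (auto simp: Qverts_def)
  then show ?thesis by (rule symdiff_subset)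
qed

lemma shortest_path_length_le:
  assumes "is_shortest_path V E P u v" "is_path V E Q u v"
  shows "length P \<le> 1 + card (path_edges Q \<inter> orb 0) + card (symdiff (fst u) (fst v))"
proof -
  define D where "D = symdiff (fst u) (fst v)"
  have Q: "is_walk V E Q" "distinct Q" "hd Q = u" "last Q = v"
    using assms(2) by (simp_all add: is_path_iff_walk)
  have u: "fst u \<subseteq> {0..<n}"
    using is_walk_hd_last_in[OF Q(1)] Q(3) by (auto simp: Qverts_def)
  have "finite D"
    using symdiff_path_ends_subset[OF assms(2)] finite_subset unfolding D_def by blast
  have "\<exists>p\<in>set Q. flippable (snd p) c" if "c \<in> D" for c
  proof -
    have "c \<in> symdiff (fst (hd Q)) (fst (last Q))" using that Q(3,4) by (simp add: D_def)
    then obtain e where e: "e \<in> path_edges Q" "c \<in> flipped e"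
      using flipped_along_path Q(1) unfolding is_walk_def by blast
    then obtain p where "p \<in> e" by (auto simp: flipped_def)
    moreover have "e \<in> E" using e(1) Q(1) by (auto simp: is_walk_def)
    ultimately show ?thesis using flippable_of_flipped e path_edges_subset_set[OF e(1)] by blast
  qed
  then obtain W where W: "is_walk V E W" "hd W = (fst u, snd (hd Q))"
    "last W = (symdiff (fst u) D, snd (last Q))"
    "length W \<le> 1 + card (path_edges Q \<inter> orb 0) + card D"
    using walk_shadowing_levels[OF Q(1,2) \<open>finite D\<close> _ u] by blast
  have "hd W = u" "last W = v" using W(2,3) Q(3,4) by (simp_all add: D_def)
  then obtain P' where "is_path V E P' u v" "length P' \<le> length W"
    using walk_contains_path[OF W(1)] by auto
  then show ?thesis using assms(1) W(4) unfolding is_shortest_path_def D_def by fastforce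
qed

lemma length_eq_sum_Qorbit_counts:
  assumes "is_path V E P u v"
  shows "length P = 1 + (\<Sum>i\<in>{0..d}. card (path_edges P \<inter> orb i))"
proof -
  have "path_edges P = (\<Union>i\<in>{0..d}. path_edges P \<inter> orb i)"
    using assms by (auto simp: is_path_iff_walk is_walk_def mem_Qedges)
  then have "card (path_edges P) = card (\<Union>i\<in>{0..d}. path_edges P \<inter> orb i)" by simp
  also have "\<dots> = (\<Sum>i\<in>{0..d}. card (path_edges P \<inter> orb i))"
  proof (rule card_UN_disjoint)
    show "\<forall>i\<in>{0..d}. \<forall>j\<in>{0..d}. i \<noteq> j \<longrightarrow> path_edges P \<inter> orb i \<inter> (path_edges P \<inter> orb j) = {}"
      using Qorbits_disjoint by blast
  qed (simp_all add: finite_path_edges)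
  finally have "card (path_edges P) = (\<Sum>i\<in>{0..d}. card (path_edges P \<inter> orb i))" .
  moreover have "card (path_edges P) = length P - 1" "0 < length P"
    using assms card_path_edges by (auto simp: is_path_iff_walk is_walk_def)
  ultimately show ?thesis by linarith
qed

subsection \<open>The case \<open>d\<close> divides \<open>n\<close>\<close>

text \<open>The representative of \<open>c mod d\<close> in \<open>{1..d}\<close>: when \<open>d\<close> divides \<open>n\<close>, only edges of
  \<open>E\<^sub>i\<close> with \<open>i = coord_orbit c\<close> toggle coordinate \<open>c\<close>.\<close>

definition coord_orbit :: "nat \<Rightarrow> nat" where
  "coord_orbit c = (if c mod d = 0 then d else c mod d)"

lemma coord_orbit_range: "coord_orbit c \<in> {1..d}"
  using d_pos by (auto simp: coord_orbit_def Suc_le_eq)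

lemma coord_orbit_flip:
  assumes "d dvd n" "i \<in> {1..d}"
  shows "coord_orbit ((i + d * x) mod n) = i"
proof -
  have "(i + d * x) mod n mod d = i mod d" using assms(1) by (simp add: mod_mod_cancel)
  then show ?thesis using assms(2) by (cases "i = d") (auto simp: coord_orbit_def)
qed

lemma Qorbit_of_flipped:
  assumes "d dvd n" "e \<in> E" "c \<in> flipped e"
  shows "e \<in> orb (coord_orbit c)"
proof -
  obtain i where i: "i \<in> {0..d}" "e \<in> orb i" using assms(2) by (auto simp: mem_Qedges)
  have "i \<noteq> 0" using i(2) assms(3) flipped_Qorbit_0 by (metis empty_iff)
  then obtain x where "flipped e = {(i + d * x) mod n}"
    using Qorbit_level_flipped i(2) by blast
  then have "coord_orbit c = i"
    using coord_orbit_flip[OF assms(1)] i(1) \<open>i \<noteq> 0\<close> assms(3) by auto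
  then show ?thesis using i(2) by simp
qed

lemma card_coord_class_le:
  assumes "d dvd n" "is_path V E P u v"
  shows "card {c \<in> symdiff (fst u) (fst v). coord_orbit c = i} \<le> card (path_edges P \<inter> orb i)"
proof -
  let ?B = "path_edges P \<inter> orb i"
  have P: "is_walk V E P" "hd P = u" "last P = v" using assms(2) by (simp_all add: is_path_iff_walk)
  have B: "?B \<subseteq> E" "finite ?B" using P(1) by (auto simp: is_walk_def finite_path_edges)
  have flipped_B: "finite (flipped e) \<and> card (flipped e) \<le> 1" if e: "e \<in> ?B" for e
  proof -
    obtain c where "flipped e \<subseteq> {c}" using flipped_Qedge_subset_singleton B(1) e by blast
    then show ?thesis using finite_subset card_mono[of "{c}" "flipped e"] by auto
  qed
  have "{c \<in> symdiff (fst u) (fst v). coord_orbit c = i} \<subseteq> (\<Union>e\<in>?B. flipped e)"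
  proof
    fix c assume c: "c \<in> {c \<in> symdiff (fst u) (fst v). coord_orbit c = i}"
    then obtain e where e: "e \<in> path_edges P" "c \<in> flipped e"
      using flipped_along_path[of P c] P by (auto simp: is_walk_def)
    then have "e \<in> orb i" using Qorbit_of_flipped[OF assms(1)] P(1) c by (auto simp: is_walk_def)
    then show "c \<in> (\<Union>e\<in>?B. flipped e)" using e by blast
  qed
  then have "card {c \<in> symdiff (fst u) (fst v). coord_orbit c = i} \<le> card (\<Union>e\<in>?B. flipped e)"
    by (rule card_mono[rotated]) (use B(2) flipped_B in blast)
  also have "\<dots> \<le> (\<Sum>e\<in>?B. card (flipped e))" by (rule card_UN_le[OF B(2)])
  also have "\<dots> \<le> (\<Sum>e\<in>?B. 1)" by (rule sum_mono) (use flipped_B in blast)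
  finally show ?thesis by simp
qed

lemma card_eq_sum_coord_classes:
  assumes "finite D"
  shows "card D = (\<Sum>i\<in>{1..d}. card {c \<in> D. coord_orbit c = i})"
proof -
  have "D = (\<Union>i\<in>{1..d}. {c \<in> D. coord_orbit c = i})" using coord_orbit_range by auto
  then have "card D = card (\<Union>i\<in>{1..d}. {c \<in> D. coord_orbit c = i})" by simp
  also have "\<dots> = (\<Sum>i\<in>{1..d}. card {c \<in> D. coord_orbit c = i})"
    by (rule card_UN_disjoint) (use assms in auto)
  finally show ?thesis .
qed

lemma shortest_path_flip_count:
  assumes "d dvd n" "is_shortest_path V E P u v" "i \<in> {1..d}"
  shows "card (path_edges P \<inter> orb i) = card {c \<in> symdiff (fst u) (fst v). coord_orbit c = i}"
proof -
  define D where "D = symdiff (fst u) (fst v)"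
  define cnt where "cnt j = card (path_edges P \<inter> orb j)" for j
  define cls where "cls j = card {c \<in> D. coord_orbit c = j}" for j
  have P: "is_path V E P u v" using assms(2) by (simp add: is_shortest_path_def)
  have "length P = 1 + cnt 0 + (\<Sum>j\<in>{1..d}. cnt j)"
    using length_eq_sum_Qorbit_counts[OF P] by (simp add: cnt_def sum.atLeast_Suc_atMost)
  moreover have "length P \<le> 1 + cnt 0 + card D"
    using shortest_path_length_le[OF assms(2) P] by (simp add: cnt_def D_def)
  moreover have "finite D"
    using symdiff_path_ends_subset[OF P] unfolding D_def by (rule finite_subset) simp
  then have "card D = (\<Sum>j\<in>{1..d}. cls j)"
    unfolding cls_def by (rule card_eq_sum_coord_classes)
  moreover have le: "cls j \<le> cnt j" if "j \<in> {1..d}" for j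
    using card_coord_class_le[OF assms(1) P] by (simp add: cls_def cnt_def D_def)
  moreover have "(\<Sum>j\<in>{1..d}. cls j) \<le> (\<Sum>j\<in>{1..d}. cnt j)" by (rule sum_mono) (rule le)
  ultimately have "(\<Sum>j\<in>{1..d}. cls j) = (\<Sum>j\<in>{1..d}. cnt j)" by linarith
  then have "cls i = cnt i" using sum_mono_inv[OF _ le assms(3)] by simp
  then show ?thesis by (simp add: cls_def cnt_def D_def)
qed

theorem Q_orbit_proportional_if_dvd:
  assumes "d dvd n"
  shows "orbit_proportional V E {0..d} orb"
  unfolding orbit_proportional_def
proof (intro allI impI ballI)
  fix u v P P' i
  assume P: "is_shortest_path V E P u v" and P': "is_path V E P' u v" and i: "i \<in> {0..d}"
  define D where "D = symdiff (fst u) (fst v)"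
  show "card (path_edges P \<inter> orb i) \<le> card (path_edges P' \<inter> orb i)"
  proof (cases "i = 0")
    case True
    have "finite D"
      using symdiff_path_ends_subset[OF P'] unfolding D_def by (rule finite_subset) simp
    have "(\<Sum>j\<in>{1..d}. card (path_edges P \<inter> orb j)) = (\<Sum>j\<in>{1..d}. card {c \<in> D. coord_orbit c = j})"
      by (rule sum.cong) (simp_all add: shortest_path_flip_count[OF assms P] D_def)
    also have "\<dots> = card D" using card_eq_sum_coord_classes[OF \<open>finite D\<close>] by simp
    finally have "(\<Sum>j\<in>{1..d}. card (path_edges P \<inter> orb j)) = card D" .
    moreover have "is_path V E P u v" using P by (simp add: is_shortest_path_def)
    ultimately have "length P = 1 + card (path_edges P \<inter> orb 0) + card D"
      using length_eq_sum_Qorbit_counts by (simp add: sum.atLeast_Suc_atMost)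
    then show ?thesis using shortest_path_length_le[OF P P'] True by (simp add: D_def)
  next
    case False
    then show ?thesis
      using shortest_path_flip_count[OF assms P] card_coord_class_le[OF assms P'] i by simp
  qed
qed

subsection \<open>The case \<open>d\<close> does not divide \<open>n\<close>\<close>

lemma level_walk:
  assumes "a \<subseteq> {0..<n}" "m < r"
  shows "is_walk V E (map (Pair a) [0..<Suc m]) \<and> path_edges (map (Pair a) [0..<Suc m]) \<subseteq> orb 0"
proof -
  have "path_edges (map (Pair a) [0..<Suc m]) \<subseteq> orb 0"
  proof
    fix e assume "e \<in> path_edges (map (Pair a) [0..<Suc m])"
    then obtain k where k: "k < m" "e = {(a, k), (a, Suc k)}"
      by (auto simp: path_edges_def simp del: upt_Suc)
    moreover have "(k + 1) mod r = Suc k" using k(1) assms(2) by simp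
    ultimately have "e = {(a, k), (a, (k + 1) mod r)}" by simp
    moreover have "(a, k) \<in> V" using assms k(1) by simp
    ultimately show "e \<in> orb 0" unfolding mem_Qorbit_0 by blast
  qed
  moreover have "set (map (Pair a) [0..<Suc m]) \<subseteq> V" using assms by auto
  ultimately show ?thesis using Qorbit_subset_Qedges[of 0] by (simp add: is_walk_def del: upt_Suc)
qed

lemma one_less_n_if_not_dvd: "\<not> d dvd n \<Longrightarrow> 1 < n"
  using d_pos d_le_n by (cases "d = 1") auto

lemma path_avoiding_Qorbit_1:
  assumes "\<not> d dvd n" "0 < r" "n dvd d * r"
  shows "\<exists>P. is_path V E P ({}, 0) ({1}, 0) \<and> path_edges P \<inter> orb 1 = {}"
proof -
  define g where "g = gcd d n"
  have "g \<noteq> d" using assms(1) gcd_dvd2[of d n] unfolding g_def by metis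
  moreover have "g \<le> d" unfolding g_def using d_pos by (simp add: gcd_le1_nat)
  moreover have "0 < g" unfolding g_def using d_pos by simp
  ultimately have g: "0 < g" "g < d" by simp_all
  have "1 < n" using one_less_n_if_not_dvd assms(1) .
  obtain x0 where x0: "x0 < r" "n dvd d * x0 + g"
    using exists_level_cancelling_gcd d_pos assms(2,3) unfolding g_def by blast
  have "(g + d * x0) mod n = 0" using x0(2) by (simp add: add.commute)
  then have "Suc (g + d * x0) mod n = Suc 0 mod n" by (metis mod_Suc_eq)
  then have "(1 + g + d * x0) mod n = 1" using \<open>1 < n\<close> by simp
  moreover have "({}, x0) \<in> V" "0 < 1 + g" using x0(1) by simp_all
  then have "{({}, x0), (symdiff {} {(1 + g + d * x0) mod n}, x0)} \<in> orb (1 + g)"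
    unfolding mem_Qorbit[OF \<open>0 < 1 + g\<close>] by blast
  ultimately have flip: "{({}, x0), ({1}, x0)} \<in> orb (1 + g)" by (simp add: symdiff_def)
  define A :: "vert list" where "A = map (Pair {}) [0..<Suc x0]"
  define B :: "vert list" where "B = map (Pair {1}) [0..<Suc x0]"
  have A: "is_walk V E A" "path_edges A \<subseteq> orb 0"
    using level_walk[of "{}" x0] x0(1) unfolding A_def by simp_all
  have B: "is_walk V E (rev B)" "path_edges (rev B) \<subseteq> orb 0"
    using level_walk[of "{1}" x0] x0(1) \<open>1 < n\<close> unfolding B_def is_walk_rev path_edges_rev
    by simp_all
  have ends: "A \<noteq> []" "rev B \<noteq> []" "hd A = ({}, 0)" "last A = ({}, x0)"
    "hd (rev B) = ({1}, x0)" "last (rev B) = ({1}, 0)"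
    by (simp_all add: A_def B_def hd_map last_map hd_rev last_rev del: upt_Suc)
  have edges: "path_edges (A @ rev B) \<subseteq> orb 0 \<union> orb (1 + g)"
    unfolding path_edges_append[OF ends(1,2)] ends(4,5) using flip A(2) B(2) by blast
  have "is_walk V E (A @ rev B)"
    using is_walk_append[OF A(1) B(1)] flip Qorbit_subset_Qedges[of "1 + g"] g ends(4,5) by auto
  moreover have "hd (A @ rev B) = ({}, 0)" "last (A @ rev B) = ({1}, 0)" using ends by simp_all
  ultimately obtain P where P: "is_path V E P ({}, 0) ({1}, 0)" "path_edges P \<subseteq> path_edges (A @ rev B)"
    using walk_contains_path by metis
  have "orb 0 \<inter> orb 1 = {}" "orb (1 + g) \<inter> orb 1 = {}"
    using Qorbits_disjoint g d_pos by auto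
  then show ?thesis using P edges by blast
qed

theorem not_Q_orbit_proportional_if_not_dvd:
  assumes "\<not> d dvd n" "0 < r" "n dvd d * r"
  shows "\<not> orbit_proportional V E {0..d} orb"
proof
  assume proportional: "orbit_proportional V E {0..d} orb"
  define u :: vert where "u = ({}, 0)"
  define v :: vert where "v = ({1}, 0)"
  obtain P where P: "is_path V E P u v" "path_edges P \<inter> orb 1 = {}"
    using path_avoiding_Qorbit_1[OF assms] unfolding u_def v_def by blast
  have "1 < n" using one_less_n_if_not_dvd assms(1) .
  have "({}, 0) \<in> V" using assms(2) by simp
  then have "{({}, 0), (symdiff {} {(1 + d * 0) mod n}, 0)} \<in> orb 1"
    using mem_Qorbit[OF zero_less_one] by blast
  then have uv: "{u, v} \<in> orb 1" using \<open>1 < n\<close> by (simp add: u_def v_def symdiff_def)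
  moreover have "orb 1 \<subseteq> E" using Qorbit_subset_Qedges[of 1] d_pos by simp
  ultimately have "is_shortest_path V E [u, v] u v"
    using \<open>1 < n\<close> assms(2) by (intro is_shortest_path_edge) (auto simp: u_def v_def)
  then have "\<forall>i\<in>{0..d}. card (path_edges [u, v] \<inter> orb i) \<le> card (path_edges P \<inter> orb i)"
    using proportional P(1) unfolding orbit_proportional_def by blast
  then have "card (path_edges [u, v] \<inter> orb 1) \<le> card (path_edges P \<inter> orb 1)"
    using d_pos by simp
  then show False using uv P(2) by simp
qed

end

theorem mainTheorem17:
  fixes n d r :: nat
  assumes "n \<ge> 2" and "d \<ge> 1" and "r \<ge> 3" and "n \<ge> d" and "(d * r) mod n = 0"
  shows "Q_G_orbit_proportional n d r \<longleftrightarrow> n mod d = 0"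
proof -
  interpret Q_graph n d r using assms by unfold_locales auto
  have "0 < r" "n dvd d * r" using assms(3,5) by (simp_all add: dvd_eq_mod_eq_0)
  then show ?thesis
    unfolding Q_G_orbit_proportional_def dvd_eq_mod_eq_0[symmetric]
    using Q_orbit_proportional_if_dvd not_Q_orbit_proportional_if_not_dvd by blast
qed

end
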